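(* Let $G\cong\mathbb{Z}_m\times Q_{2^n}$, where $m$ is odd and $n\ge 3$. Then the difference graph $\mathcal{D}(G)$ is connected and has diameter at most $3$.
   Context: For a finite group $G$ with identity $e$: the intersection power graph $\mathcal{G}_I(G)$ has vertex set $G$, two distinct non-identity vertices $x,y$ being adjacent iff $\langle x\rangle\cap\langle y\rangle\neq\{e\}$, and $e$ being adjacent to every other vertex. The power graph $\mathcal{P}(G)$ has vertex set $G$, two distinct vertices being adjacent iff one is a power of the other. The difference graph $\mathcal{D}(G)$ is the graph on vertex set $G$ with edge set $E(\mathcal{G}_I(G))\setminus E(\mathcal{P}(G))$, with all isolated vertices removed. $Q_{2^n}$ is the generalized quaternion group $\langle x,y\mid x^{2^{n-1}}=1,\ y^2=x^{2^{n-2}},\ y^{-1}xy=x^{-1}\rangle$ of order $2^n$. *)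

theory Defs
  imports "HOL-Algebra.Algebra"
begin

text \<open>Concrete model of the generalized quaternion group Q_{2^n}:
  the pair (a,b) with 0 \<le> a < 2^(n-1), b \<in> {0,1} stands for x^a y^b, where
  x^(2^(n-1)) = 1, y^2 = x^(2^(n-2)), y^-1 x y = x^-1 (so y x^c = x^-c y).\<close>
definition quaternion_group :: "nat \<Rightarrow> (int \<times> int) monoid" where
  "quaternion_group n =
     \<lparr> carrier = {0..<2^(n-1)} \<times> {0,1},
       monoid.mult = (\<lambda>p q.
          ((fst p + (if snd p = 0 then fst q else - fst q)
              + (if snd p = 1 \<and> snd q = 1 then 2^(n-2) else 0)) mod 2^(n-1),
           (snd p + snd q) mod 2)),
       one = (0,0) \<rparr>"

definition ipg_adj :: "('a, 'b) monoid_scheme \<Rightarrow> 'a \<Rightarrow> 'a \<Rightarrow> bool" where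
  "ipg_adj G x y \<longleftrightarrow> x \<in> carrier G \<and> y \<in> carrier G \<and> x \<noteq> y \<and>
     (x = \<one>\<^bsub>G\<^esub> \<or> y = \<one>\<^bsub>G\<^esub> \<or> generate G {x} \<inter> generate G {y} \<noteq> {\<one>\<^bsub>G\<^esub>})"

definition pg_adj :: "('a, 'b) monoid_scheme \<Rightarrow> 'a \<Rightarrow> 'a \<Rightarrow> bool" where
  "pg_adj G x y \<longleftrightarrow> x \<in> carrier G \<and> y \<in> carrier G \<and> x \<noteq> y \<and>
     ((\<exists>k::nat. y = x [^]\<^bsub>G\<^esub> k) \<or> (\<exists>k::nat. x = y [^]\<^bsub>G\<^esub> k))"

definition diff_edges :: "('a, 'b) monoid_scheme \<Rightarrow> ('a \<times> 'a) set" where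
  "diff_edges G = {(x, y). ipg_adj G x y \<and> \<not> pg_adj G x y}"

definition diff_vertices :: "('a, 'b) monoid_scheme \<Rightarrow> 'a set" where
  "diff_vertices G = {x. \<exists>y. (x, y) \<in> diff_edges G}"

end

(* In a finite group, x and y are adjacent in D(G) iff some nontrivial power of x is a power
   of y while neither of x, y is a power of the other. This condition only mentions powers, so
   it is carried along the isomorphism to the concrete model Z_m x Q_{2^n}, where it can be
   computed.

   In Q_{2^n} = <x, y> the element z = x^(2^(n-2)) is the unique involution. As m is odd, z is a
   power of every element whose Q-component is nontrivial, and z itself is isolated in D(G).
   Consequently every non-isolated vertex is adjacent to x, to y, or, if it lies in Z_m, to both
   b x y and b y for some b in Z_m: the Z_m-component of any element w is a power of w. Since
   x - y, x - b x y, y - b x y and b x y - b' y are edges, any two non-isolated vertices are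
   joined by a path of length at most 3. *)

theory Submission
  imports Defs "HOL-Computational_Algebra.Factorial_Ring"
begin

definition diff_adj :: "('a, 'b) monoid_scheme \<Rightarrow> 'a \<Rightarrow> 'a \<Rightarrow> bool" where
  "diff_adj G x y \<longleftrightarrow> x \<in> carrier G \<and> y \<in> carrier G \<and>
     (\<exists>(i::nat) (j::nat). x [^]\<^bsub>G\<^esub> i = y [^]\<^bsub>G\<^esub> j \<and> x [^]\<^bsub>G\<^esub> i \<noteq> \<one>\<^bsub>G\<^esub>) \<and>
     (\<forall>k :: nat. y \<noteq> x [^]\<^bsub>G\<^esub> k) \<and> (\<forall>k :: nat. x \<noteq> y [^]\<^bsub>G\<^esub> k)"

lemma diff_adj_sym: "diff_adj G x y \<Longrightarrow> diff_adj G y x"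
  unfolding diff_adj_def by (metis (no_types))

lemma (in group) diff_edges_iff_diff_adj:
  assumes "finite (carrier G)"
  shows "(x, y) \<in> diff_edges G \<longleftrightarrow> diff_adj G x y"
proof -
  have common_power: "generate G {x} \<inter> generate G {y} \<noteq> {\<one>} \<longleftrightarrow>
      (\<exists>(i::nat) (j::nat). x [^] i = y [^] j \<and> x [^] i \<noteq> \<one>)"
    if "x \<in> carrier G" "y \<in> carrier G"
  proof -
    have "\<one> \<in> generate G {x} \<inter> generate G {y}"
      using generate.one by blast
    then have "generate G {x} \<inter> generate G {y} \<noteq> {\<one>} \<longleftrightarrow>
        (\<exists>z \<in> generate G {x} \<inter> generate G {y}. z \<noteq> \<one>)"
      by blast
    also have "\<dots> \<longleftrightarrow> (\<exists>(i::nat) (j::nat). x [^] i = y [^] j \<and> x [^] i \<noteq> \<one>)"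
      using generate_pow_on_finite_carrier[OF assms] that by auto
    finally show ?thesis .
  qed
  have "(x, y) \<in> diff_edges G \<longleftrightarrow> x \<in> carrier G \<and> y \<in> carrier G \<and> x \<noteq> y \<and>
      (x = \<one> \<or> y = \<one> \<or> (\<exists>(i::nat) (j::nat). x [^] i = y [^] j \<and> x [^] i \<noteq> \<one>)) \<and>
      (\<forall>k :: nat. y \<noteq> x [^] k) \<and> (\<forall>k :: nat. x \<noteq> y [^] k)"
    unfolding diff_edges_def ipg_adj_def pg_adj_def using common_power by auto
  also have "\<dots> \<longleftrightarrow> diff_adj G x y"
  proof -
    have "x [^] (1::nat) = x" "y [^] (1::nat) = y" if "x \<in> carrier G" "y \<in> carrier G"
      using that by simp_all
    then show ?thesis
      unfolding diff_adj_def by (metis nat_pow_0)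
  qed
  finally show ?thesis .
qed

(* Unlike hom_one this does not need H to be a group; the model of Q_{2^n} is never shown
   to be one. *)
lemma iso_one_if_right_unit:
  assumes "group G" "\<phi> \<in> iso G H" "\<one>\<^bsub>H\<^esub> \<in> carrier H"
    and "\<And>z. z \<in> carrier H \<Longrightarrow> z \<otimes>\<^bsub>H\<^esub> \<one>\<^bsub>H\<^esub> = z"
  shows "\<phi> \<one>\<^bsub>G\<^esub> = \<one>\<^bsub>H\<^esub>"
proof -
  have hom: "\<phi> \<in> hom G H" and "\<phi> ` carrier G = carrier H"
    using assms(2) by (simp_all add: iso_def bij_betw_def)
  then obtain g where g: "g \<in> carrier G" "\<phi> g = \<one>\<^bsub>H\<^esub>"
    using assms(3) by (metis imageE)
  have one: "\<one>\<^bsub>G\<^esub> \<in> carrier G"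
    using assms(1) by (simp add: group.is_monoid monoid.one_closed)
  have "\<one>\<^bsub>H\<^esub> = \<phi> (\<one>\<^bsub>G\<^esub> \<otimes>\<^bsub>G\<^esub> g)"
    using assms(1) g by (simp add: group.is_monoid monoid.l_one)
  also have "\<dots> = \<phi> \<one>\<^bsub>G\<^esub> \<otimes>\<^bsub>H\<^esub> \<one>\<^bsub>H\<^esub>"
    using hom g one by (simp add: hom_mult)
  also have "\<dots> = \<phi> \<one>\<^bsub>G\<^esub>"
    using hom one assms(4) by (simp add: hom_in_carrier)
  finally show ?thesis by simp
qed

lemma hom_nat_pow_if_one:
  assumes "monoid G" "\<phi> \<in> hom G H" "\<phi> \<one>\<^bsub>G\<^esub> = \<one>\<^bsub>H\<^esub>" "x \<in> carrier G"
  shows "\<phi> (x [^]\<^bsub>G\<^esub> (k :: nat)) = \<phi> x [^]\<^bsub>H\<^esub> k"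
  using assms by (induction k) (simp_all add: hom_mult monoid.nat_pow_closed)

lemma iso_diff_adj_iff:
  assumes "group G" "\<phi> \<in> iso G H" "\<phi> \<one>\<^bsub>G\<^esub> = \<one>\<^bsub>H\<^esub>" "x \<in> carrier G" "y \<in> carrier G"
  shows "diff_adj H (\<phi> x) (\<phi> y) \<longleftrightarrow> diff_adj G x y"
proof -
  have hom: "\<phi> \<in> hom G H" and inj: "inj_on \<phi> (carrier G)"
    using assms(2) by (auto simp: iso_def bij_betw_def)
  have pow: "\<phi> (z [^]\<^bsub>G\<^esub> k) = \<phi> z [^]\<^bsub>H\<^esub> k" if "z \<in> carrier G" for z and k :: nat
    using hom_nat_pow_if_one[OF group.is_monoid[OF assms(1)] hom assms(3) that] .
  have eq: "\<phi> a = \<phi> b \<longleftrightarrow> a = b" if "a \<in> carrier G" "b \<in> carrier G" for a b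
    using inj that by (meson inj_on_eq_iff)
  have closed: "z [^]\<^bsub>G\<^esub> (k::nat) \<in> carrier G" if "z \<in> carrier G" for z k
    using assms(1) that by (simp add: group.is_monoid monoid.nat_pow_closed)
  have one: "\<one>\<^bsub>G\<^esub> \<in> carrier G"
    using assms(1) by (simp add: group.is_monoid monoid.one_closed)
  have powers: "\<phi> x [^]\<^bsub>H\<^esub> i = \<phi> y [^]\<^bsub>H\<^esub> j \<longleftrightarrow> x [^]\<^bsub>G\<^esub> i = y [^]\<^bsub>G\<^esub> j"
    "\<phi> x [^]\<^bsub>H\<^esub> i = \<one>\<^bsub>H\<^esub> \<longleftrightarrow> x [^]\<^bsub>G\<^esub> i = \<one>\<^bsub>G\<^esub>"
    "\<phi> y = \<phi> x [^]\<^bsub>H\<^esub> i \<longleftrightarrow> y = x [^]\<^bsub>G\<^esub> i"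
    "\<phi> x = \<phi> y [^]\<^bsub>H\<^esub> i \<longleftrightarrow> x = y [^]\<^bsub>G\<^esub> i" for i j :: nat
    using assms(4,5) closed one by (simp_all add: eq flip: pow assms(3))
  show ?thesis
    unfolding diff_adj_def using assms(4,5) hom_in_carrier[OF hom] powers by simp
qed

lemma relpow_map_prod_image:
  "(a, b) \<in> R ^^ k \<Longrightarrow> (f a, f b) \<in> (map_prod f f ` R) ^^ k"
proof (induction k arbitrary: b)
  case (Suc k)
  then obtain c where "(a, c) \<in> R ^^ k" and "(c, b) \<in> R"
    by (meson relpow_Suc_E)
  show ?case
  proof (rule relpow_Suc_I)
    show "(f a, f c) \<in> (map_prod f f ` R) ^^ k"
      using Suc.IH \<open>(a, c) \<in> R ^^ k\<close> .
    show "(f c, f b) \<in> map_prod f f ` R"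
      using \<open>(c, b) \<in> R\<close> by force
  qed
qed simp


lemma map_prod_image_distance_le:
  assumes "\<And>p p' q q'. (p, p') \<in> E \<Longrightarrow> (q, q') \<in> E \<Longrightarrow> \<exists>k \<le> d. (p, q) \<in> E ^^ k"
    and "u \<in> Domain (map_prod f f ` E)" "v \<in> Domain (map_prod f f ` E)"
  shows "\<exists>k \<le> d. (u, v) \<in> (map_prod f f ` E) ^^ k"
proof -
  obtain p p' where u: "u = f p" and "(p, p') \<in> E"
    using assms(2) by auto
  obtain q q' where v: "v = f q" and "(q, q') \<in> E"
    using assms(3) by auto
  obtain k where "k \<le> d" "(p, q) \<in> E ^^ k"
    using assms(1)[OF \<open>(p, p') \<in> E\<close> \<open>(q, q') \<in> E\<close>] by blast
  moreover from this(2) have "(f p, f q) \<in> (map_prod f f ` E) ^^ k"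
    by (rule relpow_map_prod_image)
  ultimately show ?thesis
    unfolding u v by blast
qed

lemma diff_edges_eq_iso_image:
  assumes "group G" "finite (carrier G)" "\<phi> \<in> iso G H" "\<phi> \<one>\<^bsub>G\<^esub> = \<one>\<^bsub>H\<^esub>"
  shows "diff_edges G =
    map_prod (inv_into (carrier G) \<phi>) (inv_into (carrier G) \<phi>) ` {(p, q). diff_adj H p q}"
    (is "_ = map_prod ?\<psi> ?\<psi> ` _")
proof -
  have bij: "bij_betw \<phi> (carrier G) (carrier H)"
    using assms(3) by (simp add: iso_def)
  have edge_iff: "(x, y) \<in> diff_edges G \<longleftrightarrow> diff_adj H (\<phi> x) (\<phi> y)"
    if "x \<in> carrier G" "y \<in> carrier G" for x y
    using group.diff_edges_iff_diff_adj[OF assms(1,2)] iso_diff_adj_iff[OF assms(1,3,4) that] by simp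
  show ?thesis
  proof (rule subset_antisym; rule subrelI)
    fix x y assume xy: "(x, y) \<in> diff_edges G"
    then have "x \<in> carrier G" "y \<in> carrier G"
      by (auto simp: diff_edges_def ipg_adj_def)
    with xy show "(x, y) \<in> map_prod ?\<psi> ?\<psi> ` {(p, q). diff_adj H p q}"
      using edge_iff bij_betw_inv_into_left[OF bij]
      by (auto intro!: image_eqI[of _ _ "(\<phi> x, \<phi> y)"])
  next
    fix x y assume "(x, y) \<in> map_prod ?\<psi> ?\<psi> ` {(p, q). diff_adj H p q}"
    then obtain p q where xy: "x = ?\<psi> p" "y = ?\<psi> q" and adj: "diff_adj H p q"
      by auto
    then have "p \<in> carrier H" "q \<in> carrier H"
      by (auto simp: diff_adj_def)
    then show "(x, y) \<in> diff_edges G"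
      unfolding xy using edge_iff adj bij_betw_inv_into_right[OF bij]
        bij_betw_apply[OF bij_betw_inv_into[OF bij]]
      by simp
  qed
qed

lemma DirProd_nat_pow:
  "(a, b) [^]\<^bsub>G \<times>\<times> H\<^esub> (k :: nat) = (a [^]\<^bsub>G\<^esub> k, b [^]\<^bsub>H\<^esub> k)"
  by (induction k) simp_all

lemma odd_mult_mod_double:
  fixes h t :: int
  assumes "0 < h" "odd t"
  shows "(t * h) mod (2 * h) = h"
proof -
  obtain r where "t = 2 * r + 1"
    using assms(2) by (blast elim: oddE)
  then have "t * h = h + r * (2 * h)"
    by (simp add: algebra_simps)
  then show ?thesis
    using assms(1) by simp
qed

context
  fixes m n :: nat
  assumes odd_m: "odd m" and n_ge_3: "n \<ge> 3"
begin

(* (a, c, e) stands for (a, x^c y^e); thus (0, 1, 0) and (0, 0, 1) are x and y, and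
   (0, half, 0) is the involution z. *)
abbreviation ZQ :: "(int \<times> int \<times> int) monoid" where
  "ZQ \<equiv> integer_mod_group m \<times>\<times> quaternion_group n"

definition half :: int where
  "half = 2 ^ (n - 2)"

lemma half_ge_2: "half \<ge> 2"
proof -
  have "(2::int) ^ 1 \<le> 2 ^ (n - 2)"
    using n_ge_3 by (intro power_increasing) auto
  then show ?thesis
    by (simp add: half_def)
qed

lemma two_pow_eq_double_half: "(2::int) ^ (n - 1) = 2 * half"
proof -
  have "n - 1 = Suc (n - 2)"
    using n_ge_3 by arith
  then show ?thesis
    by (simp add: half_def)
qed

lemma quaternion_group_mult:
  "(c, e) \<otimes>\<^bsub>quaternion_group n\<^esub> (d, f) =
     ((c + (if e = 0 then d else - d) + (if e = 1 \<and> f = 1 then half else 0)) mod (2 * half),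
      (e + f) mod 2)"
  unfolding quaternion_group_def two_pow_eq_double_half half_def [symmetric] by simp

lemma integer_mod_group_carrier_iff [simp]:
  "a \<in> carrier (integer_mod_group m) \<longleftrightarrow> 0 \<le> a \<and> a < int m"
  using odd_m by (auto simp: carrier_integer_mod_group)

lemma quaternion_group_carrier_iff [simp]:
  "(c, e) \<in> carrier (quaternion_group n) \<longleftrightarrow> 0 \<le> c \<and> c < 2 * half \<and> (e = 0 \<or> e = 1)"
  unfolding quaternion_group_def two_pow_eq_double_half by auto

lemma quaternion_group_one [simp]: "\<one>\<^bsub>quaternion_group n\<^esub> = (0, 0)"
  by (simp add: quaternion_group_def)

lemma ZQ_r_one:
  assumes "w \<in> carrier ZQ"
  shows "w \<otimes>\<^bsub>ZQ\<^esub> \<one>\<^bsub>ZQ\<^esub> = w"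
proof -
  obtain a c e where w: "w = (a, c, e)"
    by (cases w)
  have "0 \<le> a" "a < int m" "0 \<le> c" "c < 2 * half" "e = 0 \<or> e = 1"
    using assms unfolding w by auto
  then show ?thesis
    unfolding w by (auto simp: quaternion_group_mult)
qed

lemma ZQ_pow_0:
  "(a, c, 0) [^]\<^bsub>ZQ\<^esub> (k :: nat) = ((int k * a) mod int m, (int k * c) mod (2 * half), 0)"
proof -
  have "(c, 0) [^]\<^bsub>quaternion_group n\<^esub> k = ((int k * c) mod (2 * half), 0)"
    by (induction k)
      (simp_all add: quaternion_group_mult mod_add_right_eq distrib_right add.commute)
  then show ?thesis
    by (simp add: DirProd_nat_pow)
qed

lemma quaternion_pow_1:
  assumes "0 \<le> c" "c < 2 * half"
  shows "(c, 1) [^]\<^bsub>quaternion_group n\<^esub> (k :: nat) =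
    (if k mod 4 = 0 then (0, 0) else if k mod 4 = 1 then (c, 1)
     else if k mod 4 = 2 then (half, 0) else ((c + half) mod (2 * half), 1))"
proof (induction k)
  case 0
  show ?case by simp
next
  case (Suc k)
  have "((c + half) mod (2 * half) - c + half) mod (2 * half) =
      (((c + half) mod (2 * half) - c) mod (2 * half) + half) mod (2 * half)"
    by (simp only: mod_add_left_eq)
  also have "\<dots> = (c + half - c + half) mod (2 * half)"
    by (simp only: mod_diff_left_eq mod_add_left_eq)
  finally have fourth_step: "((c + half) mod (2 * half) - c + half) mod (2 * half) = 0"
    by simp
  have steps:
    "(0, 0) \<otimes>\<^bsub>quaternion_group n\<^esub> (c, 1) = (c, 1)"
    "(c, 1) \<otimes>\<^bsub>quaternion_group n\<^esub> (c, 1) = (half, 0)"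
    "(half, 0) \<otimes>\<^bsub>quaternion_group n\<^esub> (c, 1) = ((c + half) mod (2 * half), 1)"
    "((c + half) mod (2 * half), 1) \<otimes>\<^bsub>quaternion_group n\<^esub> (c, 1) = (0, 0)"
    using assms half_ge_2 fourth_step by (simp_all add: quaternion_group_mult add.commute[of half c])
  have "k mod 4 = 0 \<or> k mod 4 = 1 \<or> k mod 4 = 2 \<or> k mod 4 = 3"
    by arith
  moreover have "Suc k mod 4 = (if k mod 4 = 3 then 0 else Suc (k mod 4))"
    by (simp add: mod_Suc)
  ultimately show ?case
    using Suc.IH steps by auto
qed

lemma ZQ_pow_1:
  assumes "0 \<le> c" "c < 2 * half"
  shows "(a, c, 1) [^]\<^bsub>ZQ\<^esub> (k :: nat) = ((int k * a) mod int m,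
    if k mod 4 = 0 then (0, 0) else if k mod 4 = 1 then (c, 1)
    else if k mod 4 = 2 then (half, 0) else ((c + half) mod (2 * half), 1))"
  using quaternion_pow_1[OF assms] by (simp add: DirProd_nat_pow)

lemma fst_ZQ_pow: "fst (w [^]\<^bsub>ZQ\<^esub> (k :: nat)) = (int k * fst w) mod int m"
  by (cases w) (simp add: DirProd_nat_pow)

lemma ZQ_pow_1_involution:
  assumes "(a, c, 1) \<in> carrier ZQ"
  shows "(a, c, 1) [^]\<^bsub>ZQ\<^esub> (2 * m) = (0, half, 0)"
proof -
  have "(2 * m) mod 4 = 2"
    using odd_m by presburger
  then show ?thesis
    using assms by (simp add: ZQ_pow_1)
qed

lemma ZQ_pow_0_involution:
  assumes "(a, c, 0) \<in> carrier ZQ" "c \<noteq> 0"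
  shows "\<exists>k :: nat. (a, c, 0) [^]\<^bsub>ZQ\<^esub> k = (0, half, 0)"
proof -
  define s where "s = multiplicity 2 c"
  obtain t where c: "c = 2 ^ s * t" and "odd t"
    using multiplicity_decompose'[of c 2] assms(2) unfolding s_def by auto
  have "0 < c" "c < 2 * half"
    using assms by auto
  then have "0 < t"
    using c by (simp add: zero_less_mult_iff)
  then have "(2::int) ^ s \<le> c"
    unfolding c by (simp add: mult_le_cancel_left1)
  then have "(2::int) ^ s < 2 ^ (n - 1)"
    using \<open>c < 2 * half\<close> two_pow_eq_double_half by simp
  then have "s + (n - 2 - s) = n - 2"
    using n_ge_3 by simp
  then have eq: "int (m * 2 ^ (n - 2 - s)) * c = (int m * t) * half"
    unfolding c half_def by (simp flip: power_add)
  have "((int m * t) * half) mod (2 * half) = half"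
    using odd_m \<open>odd t\<close> half_ge_2 by (intro odd_mult_mod_double) auto
  then have "(int (m * 2 ^ (n - 2 - s)) * c) mod (2 * half) = half"
    by (simp only: eq)
  then have "(a, c, 0) [^]\<^bsub>ZQ\<^esub> (m * 2 ^ (n - 2 - s)) = (0, half, 0)"
    by (simp add: ZQ_pow_0)
  then show ?thesis ..
qed

lemma diff_adj_ZQ_if_powers_involution:
  assumes "u \<in> carrier ZQ" "v \<in> carrier ZQ"
    and "\<exists>i :: nat. u [^]\<^bsub>ZQ\<^esub> i = (0, half, 0)" "\<exists>j :: nat. v [^]\<^bsub>ZQ\<^esub> j = (0, half, 0)"
    and "\<forall>k :: nat. v \<noteq> u [^]\<^bsub>ZQ\<^esub> k" "\<forall>k :: nat. u \<noteq> v [^]\<^bsub>ZQ\<^esub> k"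
  shows "diff_adj ZQ u v"
proof -
  obtain i j :: nat where "u [^]\<^bsub>ZQ\<^esub> i = (0, half, 0)" "v [^]\<^bsub>ZQ\<^esub> j = (0, half, 0)"
    using assms(3,4) by blast
  moreover have "(0, half, 0) \<noteq> \<one>\<^bsub>ZQ\<^esub>"
    using half_ge_2 by simp
  ultimately show ?thesis
    using assms(1,2,5,6) unfolding diff_adj_def by metis
qed

lemma diff_adj_xcy_x:
  assumes "(a, c, 1) \<in> carrier ZQ"
  shows "diff_adj ZQ (a, c, 1) (0, 1, 0)"
proof (rule diff_adj_ZQ_if_powers_involution)
  show "(0, 1, 0) \<in> carrier ZQ"
    using odd_pos[OF odd_m] half_ge_2 by auto
  show "\<exists>j :: nat. (0, 1, 0) [^]\<^bsub>ZQ\<^esub> j = (0, half, 0)"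
    using \<open>(0, 1, 0) \<in> carrier ZQ\<close> by (rule ZQ_pow_0_involution) simp
  show "\<forall>k :: nat. (0, 1, 0) \<noteq> (a, c, 1) [^]\<^bsub>ZQ\<^esub> k"
    using assms half_ge_2 by (simp add: ZQ_pow_1)
  show "\<forall>k :: nat. (a, c, 1) \<noteq> (0, 1, 0) [^]\<^bsub>ZQ\<^esub> k"
    by (simp add: ZQ_pow_0)
qed (use assms ZQ_pow_1_involution in auto)

lemma diff_adj_xc_y:
  assumes "(a, c, 0) \<in> carrier ZQ" "c \<noteq> 0" "(a, c, 0) \<noteq> (0, half, 0)"
  shows "diff_adj ZQ (a, c, 0) (0, 0, 1)"
proof (rule diff_adj_ZQ_if_powers_involution)
  show "(0, 0, 1) \<in> carrier ZQ"
    using odd_pos[OF odd_m] half_ge_2 by auto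
  then show "\<exists>j :: nat. (0, 0, 1) [^]\<^bsub>ZQ\<^esub> j = (0, half, 0)"
    using ZQ_pow_1_involution by blast
  show "\<forall>k :: nat. (0, 0, 1) \<noteq> (a, c, 0) [^]\<^bsub>ZQ\<^esub> k"
    by (simp add: ZQ_pow_0)
  show "\<forall>k :: nat. (a, c, 0) \<noteq> (0, 0, 1) [^]\<^bsub>ZQ\<^esub> k"
    using assms half_ge_2 by (simp add: ZQ_pow_1)
qed (use assms ZQ_pow_0_involution in auto)

lemma diff_adj_xcy_xdy:
  assumes "(a, c, 1) \<in> carrier ZQ" "(b, d, 1) \<in> carrier ZQ" "c mod half \<noteq> d mod half"
  shows "diff_adj ZQ (a, c, 1) (b, d, 1)"
proof (rule diff_adj_ZQ_if_powers_involution)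
  have shift: "((x + half) mod (2 * half)) mod half = x mod half" for x
    by (simp add: mod_mod_cancel)
  show "\<forall>k :: nat. (b, d, 1) \<noteq> (a, c, 1) [^]\<^bsub>ZQ\<^esub> k"
    using assms shift[of c] by (auto simp: ZQ_pow_1)
  show "\<forall>k :: nat. (a, c, 1) \<noteq> (b, d, 1) [^]\<^bsub>ZQ\<^esub> k"
    using assms shift[of d] by (auto simp: ZQ_pow_1)
qed (use assms ZQ_pow_1_involution in auto)

lemma involution_not_diff_adj: "\<not> diff_adj ZQ (0, half, 0) w"
proof
  assume adj: "diff_adj ZQ (0, half, 0) w"
  then obtain i j :: nat where ij: "(0, half, 0) [^]\<^bsub>ZQ\<^esub> i = w [^]\<^bsub>ZQ\<^esub> j"
      "(0, half, 0) [^]\<^bsub>ZQ\<^esub> i \<noteq> \<one>\<^bsub>ZQ\<^esub>"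
    unfolding diff_adj_def by blast
  have "(0, half, 0) [^]\<^bsub>ZQ\<^esub> i = (0, half, 0)"
    using ij(2) by (cases "even i") (simp_all add: ZQ_pow_0)
  then have "(0, half, 0) = w [^]\<^bsub>ZQ\<^esub> j"
    using ij(1) by simp
  with adj show False
    unfolding diff_adj_def by blast
qed

(* crt_exp is 1 mod m and 0 mod 2^(n-1), so w^crt_exp is the Z_m-component of w. *)
definition crt_exp :: nat where
  "crt_exp = (m + 1) ^ (n - 1)"

lemma crt_exp_mod_m: "crt_exp mod m = 1 mod m"
proof -
  have "crt_exp mod m = ((m + 1) mod m) ^ (n - 1) mod m"
    unfolding crt_exp_def by (simp add: power_mod)
  also have "\<dots> = 1 mod m"
    by (metis mod_add_self1 power_mod power_one)
  finally show ?thesis .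
qed

lemma two_pow_dvd_crt_exp: "2 ^ (n - 1) dvd crt_exp"
  unfolding crt_exp_def using odd_m by (intro dvd_power_same) simp

lemma four_dvd_crt_exp: "4 dvd crt_exp"
proof -
  have "(2::nat) ^ 2 dvd 2 ^ (n - 1)"
    using n_ge_3 by (intro le_imp_power_dvd) auto
  then show ?thesis
    using two_pow_dvd_crt_exp dvd_trans by force
qed

lemma ZQ_pow_crt_exp:
  assumes "(b, d, e) \<in> carrier ZQ"
  shows "(b, d, e) [^]\<^bsub>ZQ\<^esub> (k * crt_exp) = ((int k * b) mod int m, 0, 0)"
proof -
  have "(int (k * crt_exp) * b) mod int m = (int k * b * int crt_exp) mod int m"
    by (simp add: algebra_simps)
  also have "\<dots> = (int k * b * (int crt_exp mod int m)) mod int m"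
    by (simp only: mod_mult_right_eq)
  also have "int crt_exp mod int m = 1 mod int m"
    using crt_exp_mod_m by (metis of_nat_1 zmod_int)
  also have "(int k * b * (1 mod int m)) mod int m = (int k * b) mod int m"
    by (metis mod_mult_right_eq mult.right_neutral)
  finally have fst_part: "(int (k * crt_exp) * b) mod int m = (int k * b) mod int m" .
  show ?thesis
  proof (cases "e = 0")
    case True
    have "(2::nat) ^ (n - 1) dvd k * crt_exp"
      using two_pow_dvd_crt_exp by simp
    then have "(2::int) ^ (n - 1) dvd int (k * crt_exp)"
      by (metis of_nat_dvd_iff of_nat_numeral of_nat_power)
    then have "2 * half dvd int (k * crt_exp)"
      by (simp only: two_pow_eq_double_half)
    then show ?thesis
      using True fst_part by (simp add: ZQ_pow_0)
  next
    case False
    then show ?thesis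
      using assms fst_part four_dvd_crt_exp by (auto simp: ZQ_pow_1)
  qed
qed

lemma diff_adj_Zm_xdy:
  assumes adj: "diff_adj ZQ (a, 0, 0) (b, d, e)" and "0 \<le> d'" "d' < 2 * half"
  shows "diff_adj ZQ (a, 0, 0) (b, d', 1)"
proof -
  from adj obtain i j :: nat where ij: "(a, 0, 0) [^]\<^bsub>ZQ\<^esub> i = (b, d, e) [^]\<^bsub>ZQ\<^esub> j"
      "(a, 0, 0) [^]\<^bsub>ZQ\<^esub> i \<noteq> \<one>\<^bsub>ZQ\<^esub>"
    and not_pow: "\<forall>k :: nat. (a, 0, 0) \<noteq> (b, d, e) [^]\<^bsub>ZQ\<^esub> k"
    and carrier: "(a, 0, 0) \<in> carrier ZQ" "(b, d, e) \<in> carrier ZQ"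
    unfolding diff_adj_def by blast
  have pow_a: "(a, 0, 0) [^]\<^bsub>ZQ\<^esub> i = ((int i * a) mod int m, 0, 0)"
    by (simp add: ZQ_pow_0)
  have "(int i * a) mod int m = (int j * b) mod int m"
    using arg_cong[OF ij(1), of fst] by (simp add: pow_a fst_ZQ_pow)
  then have common: "(a, 0, 0) [^]\<^bsub>ZQ\<^esub> i = (b, d', 1) [^]\<^bsub>ZQ\<^esub> (j * crt_exp)"
    using carrier assms(2,3) by (simp add: pow_a ZQ_pow_crt_exp)
  have "(a, 0, 0) \<noteq> (b, d', 1) [^]\<^bsub>ZQ\<^esub> k" for k :: nat
  proof
    assume "(a, 0, 0) = (b, d', 1) [^]\<^bsub>ZQ\<^esub> k"
    then have "a = (int k * b) mod int m"
      using arg_cong[of _ _ fst] by (metis fst_ZQ_pow fst_conv)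
    then have "(a, 0, 0) = (b, d, e) [^]\<^bsub>ZQ\<^esub> (k * crt_exp)"
      using carrier by (simp add: ZQ_pow_crt_exp)
    with not_pow show False
      by blast
  qed
  moreover have "(b, d', 1) \<noteq> (a, 0, 0) [^]\<^bsub>ZQ\<^esub> k" for k :: nat
    by (simp add: ZQ_pow_0)
  ultimately show ?thesis
    using carrier assms(2,3) common ij(2) unfolding diff_adj_def by auto
qed

lemma diff_adj_ZQ_hubs:
  assumes "diff_adj ZQ u w"
  shows "diff_adj ZQ u (0, 1, 0) \<or> diff_adj ZQ u (0, 0, 1) \<or>
    (\<exists>b \<in> {0..<int m}. diff_adj ZQ u (b, 1, 1) \<and> diff_adj ZQ u (b, 0, 1))"
proof -
  obtain a c e where u: "u = (a, c, e)"
    by (cases u)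
  obtain b d f where w: "w = (b, d, f)"
    by (cases w)
  have "u \<in> carrier ZQ" "w \<in> carrier ZQ"
    using assms unfolding diff_adj_def by blast+
  then have ranges: "0 \<le> a" "a < int m" "0 \<le> c" "c < 2 * half" "e = 0 \<or> e = 1"
      "0 \<le> b" "b < int m"
    unfolding u w by auto
  consider "e = 1" | "e = 0" "c \<noteq> 0" | "e = 0" "c = 0"
    using ranges(5) by blast
  then show ?thesis
  proof cases
    case 1
    then show ?thesis
      using ranges diff_adj_xcy_x unfolding u by auto
  next
    case 2
    have "u \<noteq> (0, half, 0)"
      using assms involution_not_diff_adj by blast
    then show ?thesis
      using 2 ranges diff_adj_xc_y unfolding u by auto
  next
    case 3
    then have "diff_adj ZQ u (b, d', 1)" if "0 \<le> d'" "d' < 2 * half" for d'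
      using assms diff_adj_Zm_xdy that unfolding u w by blast
    then have "diff_adj ZQ u (b, 1, 1)" "diff_adj ZQ u (b, 0, 1)"
      using half_ge_2 by auto
    then show ?thesis
      using ranges by auto
  qed
qed

lemma ZQ_hubs_diff_adj:
  shows "diff_adj ZQ (0, 1, 0) (0, 0, 1)"
    and "b \<in> {0..<int m} \<Longrightarrow> diff_adj ZQ (0, 1, 0) (b, 1, 1)"
    and "b \<in> {0..<int m} \<Longrightarrow> diff_adj ZQ (0, 0, 1) (b, 1, 1)"
    and "b \<in> {0..<int m} \<Longrightarrow> b' \<in> {0..<int m} \<Longrightarrow> diff_adj ZQ (b, 1, 1) (b', 0, 1)"
proof -
  have "0 mod half \<noteq> 1 mod half"
    using half_ge_2 by simp
  moreover have "(0, 0, 1) \<in> carrier ZQ"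
    using odd_pos[OF odd_m] half_ge_2 by auto
  then show "diff_adj ZQ (0, 1, 0) (0, 0, 1)"
    by (intro diff_adj_sym[OF diff_adj_xcy_x])
  show "diff_adj ZQ (0, 1, 0) (b, 1, 1)" if "b \<in> {0..<int m}"
    using that half_ge_2 by (intro diff_adj_sym[OF diff_adj_xcy_x]) auto
  show "diff_adj ZQ (0, 0, 1) (b, 1, 1)" if "b \<in> {0..<int m}"
    using that odd_pos[OF odd_m] half_ge_2 \<open>0 mod half \<noteq> 1 mod half\<close>
    by (intro diff_adj_xcy_xdy) auto
  show "diff_adj ZQ (b, 1, 1) (b', 0, 1)" if "b \<in> {0..<int m}" "b' \<in> {0..<int m}"
    using that half_ge_2 \<open>0 mod half \<noteq> 1 mod half\<close> by (intro diff_adj_xcy_xdy) auto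
qed

lemma ZQ_diff_adj_distance_le_3:
  assumes "diff_adj ZQ u u'" "diff_adj ZQ v v'"
  shows "\<exists>k \<le> 3. (u, v) \<in> {(p, q). diff_adj ZQ p q} ^^ k"
proof -
  let ?E = "{(p, q). diff_adj ZQ p q}"
  have via_hubs: "\<exists>k \<le> 3. (u, v) \<in> ?E ^^ k"
    if "diff_adj ZQ u s" "diff_adj ZQ t v" "s = t \<or> diff_adj ZQ s t" for s t
    using that(3)
  proof
    assume "s = t"
    with that(1,2) have "(u, v) \<in> ?E ^^ 2"
      by (auto simp: numeral_2_eq_2 intro: relpow_Suc_I)
    then show ?thesis
      by (intro exI[of _ "2::nat"]) simp
  next
    assume "diff_adj ZQ s t"
    with that(1,2) have "(u, v) \<in> ?E ^^ 3"
      by (auto simp: numeral_3_eq_3 intro: relpow_Suc_I)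
    then show ?thesis
      by (intro exI[of _ "3::nat"]) simp
  qed
  have hub_v: "diff_adj ZQ (0, 1, 0) v \<or> diff_adj ZQ (0, 0, 1) v \<or>
      (\<exists>b \<in> {0..<int m}. diff_adj ZQ (b, 1, 1) v \<and> diff_adj ZQ (b, 0, 1) v)"
    using diff_adj_ZQ_hubs[OF assms(2)] by (metis diff_adj_sym)
  show ?thesis
    using diff_adj_ZQ_hubs[OF assms(1)] hub_v
    by (elim disjE bexE conjE)
      (blast intro: via_hubs ZQ_hubs_diff_adj diff_adj_sym[OF ZQ_hubs_diff_adj(1)]
        diff_adj_sym[OF ZQ_hubs_diff_adj(2)] diff_adj_sym[OF ZQ_hubs_diff_adj(3)])+
qed

lemma finite_carrier_ZQ: "finite (carrier ZQ)"
  using odd_pos[OF odd_m] by (simp add: carrier_integer_mod_group quaternion_group_def)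

lemma iso_ZQ_one:
  assumes "group G" "\<phi> \<in> iso G ZQ"
  shows "\<phi> \<one>\<^bsub>G\<^esub> = \<one>\<^bsub>ZQ\<^esub>"
  using assms ZQ_r_one odd_pos[OF odd_m] half_ge_2 by (intro iso_one_if_right_unit) auto

end

theorem lemma4p12:
  fixes G :: "('a, 'b) monoid_scheme" and m n :: nat
  assumes "group G"
    and "G \<cong> integer_mod_group m \<times>\<times> quaternion_group n"
    and "odd m" and "n \<ge> 3"
  shows "diff_vertices G \<noteq> {} \<and>
         (\<forall>u \<in> diff_vertices G. \<forall>v \<in> diff_vertices G.
            \<exists>k \<le> 3. (u, v) \<in> (diff_edges G) ^^ k)"
proof -
  let ?H = "integer_mod_group m \<times>\<times> quaternion_group n"
  let ?E = "{(p, q). diff_adj ?H p q}"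
  obtain \<phi> where \<phi>: "\<phi> \<in> iso G ?H"
    using assms(2) unfolding is_iso_def by blast
  define \<psi> where "\<psi> = inv_into (carrier G) \<phi>"
  have "finite (carrier G)"
    using iso_finite[OF assms(2)] finite_carrier_ZQ[OF assms(3,4)] by simp
  moreover have "\<phi> \<one>\<^bsub>G\<^esub> = \<one>\<^bsub>?H\<^esub>"
    using iso_ZQ_one[OF assms(3,4,1) \<phi>] .
  ultimately have edges: "diff_edges G = map_prod \<psi> \<psi> ` ?E"
    unfolding \<psi>_def by (rule diff_edges_eq_iso_image[OF assms(1) _ \<phi>])
  have "(\<psi> (0, 1, 0), \<psi> (0, 0, 1)) \<in> diff_edges G"
    using ZQ_hubs_diff_adj(1)[OF assms(3,4)] unfolding edges by blast
  moreover have "\<exists>k \<le> 3. (u, v) \<in> diff_edges G ^^ k"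
    if "u \<in> Domain (diff_edges G)" "v \<in> Domain (diff_edges G)" for u v
    using that unfolding edges
    by (intro map_prod_image_distance_le) (use ZQ_diff_adj_distance_le_3[OF assms(3,4)] in auto)
  moreover have "diff_vertices G = Domain (diff_edges G)"
    by (simp add: diff_vertices_def Domain_unfold)
  ultimately show ?thesis
    by blast
qed

end
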